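(* Let $k$ be an algebraically closed complete non-Archimedean field and $A$ a strictly affinoid $k$-algebra. Let $\mathfrak U$ be a finite open cover of $\mathcal M(A)$. Then for every sufficiently small $\varepsilon\in|k^*|$ there is a finite cover $\mathfrak V$ of $\mathrm{Id}(A_\varepsilon)$ by constructible sets (clopen for the constructible topology) such that $\{\mathrm{red}_\varepsilon^{-1}(U):U\in\mathfrak V\}$ refines $\mathfrak U$.
   Context: $k^\circ=\{|z|\le1\}$; $\rho(a)=\lim_n\|a^n\|^{1/n}$ is the spectral norm on $A$, $A^\circ=\{\rho\le1\}$, $A_\varepsilon=A^\circ/\{\rho<\varepsilon\}$. $\mathcal M(A)$ is the Berkovich spectrum. $\mathrm{Id}(A_\varepsilon)$ is the set of proper ideals of $A_\varepsilon$ with the constructible topology (induced from the product topology on $\{0,1\}^{A_\varepsilon}$; constructible sets are finite Boolean combinations of sets $\{\mathfrak A: g\in\mathfrak A\}$). The $\varepsilon$-reduction map $\mathrm{red}_\varepsilon\colon\mathcal M(A)\to\mathrm{Id}(A_\varepsilon)$ sends $x$ to the image in $A_\varepsilon$ of the ideal $\{a\in A^\circ:|a(x)|<\varepsilon\}$. *)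

theory Defs
  imports "HOL-Analysis.Analysis" "HOL-Computational_Algebra.Polynomial" "HOL-Algebra.QuotRing"
begin

definition nonarch_abs :: "('k::field \<Rightarrow> real) \<Rightarrow> bool" where
  "nonarch_abs v \<longleftrightarrow> (\<forall>x. 0 \<le> v x) \<and> (\<forall>x. v x = 0 \<longleftrightarrow> x = 0)
     \<and> (\<forall>x y. v (x * y) = v x * v y) \<and> (\<forall>x y. v (x + y) \<le> max (v x) (v y))"

definition complete_abs :: "('k::field \<Rightarrow> real) \<Rightarrow> bool" where
  "complete_abs v \<longleftrightarrow> (\<forall>s::nat \<Rightarrow> 'k.
     (\<forall>e>0. \<exists>N. \<forall>m\<ge>N. \<forall>n\<ge>N. v (s m - s n) < e) \<longrightarrow>
     (\<exists>L. \<forall>e>0. \<exists>N. \<forall>n\<ge>N. v (s n - L) < e))"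

definition nontrivial_abs :: "('k::field \<Rightarrow> real) \<Rightarrow> bool" where
  "nontrivial_abs v \<longleftrightarrow> (\<exists>x. v x \<noteq> 0 \<and> v x \<noteq> 1)"

definition alg_closed :: "'k::field itself \<Rightarrow> bool" where
  "alg_closed _ \<longleftrightarrow> (\<forall>p :: 'k poly. 0 < degree p \<longrightarrow> (\<exists>x. poly p x = 0))"

definition multiidx :: "nat \<Rightarrow> (nat \<Rightarrow> nat) set" where
  "multiidx n = {\<alpha>. \<forall>i\<ge>n. \<alpha> i = 0}"

text \<open>Restricted power series: coefficient families tending to 0.\<close>
definition tate_alg :: "('k::field \<Rightarrow> real) \<Rightarrow> nat \<Rightarrow> ((nat \<Rightarrow> nat) \<Rightarrow> 'k) set" where
  "tate_alg v n = {f. (\<forall>\<alpha>. \<alpha> \<notin> multiidx n \<longrightarrow> f \<alpha> = 0) \<and> (\<forall>e>0. finite {\<alpha>. e \<le> v (f \<alpha>)})}"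

definition gauss_norm :: "('k::field \<Rightarrow> real) \<Rightarrow> ((nat \<Rightarrow> nat) \<Rightarrow> 'k) \<Rightarrow> real" where
  "gauss_norm v f = Sup (range (\<lambda>\<alpha>. v (f \<alpha>)))"

definition tate_add :: "((nat \<Rightarrow> nat) \<Rightarrow> 'k::field) \<Rightarrow> ((nat \<Rightarrow> nat) \<Rightarrow> 'k) \<Rightarrow> ((nat \<Rightarrow> nat) \<Rightarrow> 'k)" where
  "tate_add f g = (\<lambda>\<alpha>. f \<alpha> + g \<alpha>)"

definition tate_mult :: "nat \<Rightarrow> ((nat \<Rightarrow> nat) \<Rightarrow> 'k::field) \<Rightarrow> ((nat \<Rightarrow> nat) \<Rightarrow> 'k) \<Rightarrow> ((nat \<Rightarrow> nat) \<Rightarrow> 'k)" where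
  "tate_mult n f g = (\<lambda>\<gamma>. \<Sum>(\<alpha>, \<beta>) \<in> {(\<alpha>, \<beta>). \<alpha> \<in> multiidx n \<and> \<beta> \<in> multiidx n \<and> (\<lambda>i. \<alpha> i + \<beta> i) = \<gamma>}.
                         f \<alpha> * g \<beta>)"

definition tate_const :: "'k::field \<Rightarrow> ((nat \<Rightarrow> nat) \<Rightarrow> 'k)" where
  "tate_const c = (\<lambda>\<alpha>. if \<alpha> = (\<lambda>_. 0) then c else 0)"

text \<open>Surjective k-algebra homomorphism T_n \<rightarrow> A (A = UNIV of a type, k-structure via emb).\<close>
definition tate_epi :: "('k::field \<Rightarrow> real) \<Rightarrow> ('k \<Rightarrow> 'a::comm_ring_1) \<Rightarrow> nat
    \<Rightarrow> (((nat \<Rightarrow> nat) \<Rightarrow> 'k) \<Rightarrow> 'a) \<Rightarrow> bool" where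
  "tate_epi v emb n \<phi> \<longleftrightarrow>
     (\<forall>f\<in>tate_alg v n. \<forall>g\<in>tate_alg v n.
        \<phi> (tate_add f g) = \<phi> f + \<phi> g \<and> \<phi> (tate_mult n f g) = \<phi> f * \<phi> g)
   \<and> (\<forall>c. \<phi> (tate_const c) = emb c)
   \<and> (\<forall>a. \<exists>f\<in>tate_alg v n. \<phi> f = a)"

definition residue_norm :: "('k::field \<Rightarrow> real) \<Rightarrow> nat \<Rightarrow> (((nat \<Rightarrow> nat) \<Rightarrow> 'k) \<Rightarrow> 'a) \<Rightarrow> 'a \<Rightarrow> real" where
  "residue_norm v n \<phi> a = Inf (gauss_norm v ` {f \<in> tate_alg v n. \<phi> f = a})"

definition k_alg_norm :: "('k::field \<Rightarrow> real) \<Rightarrow> ('k \<Rightarrow> 'a::comm_ring_1) \<Rightarrow> ('a \<Rightarrow> real) \<Rightarrow> bool" where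
  "k_alg_norm v emb nA \<longleftrightarrow>
     emb 1 = 1 \<and> (\<forall>c d. emb (c + d) = emb c + emb d \<and> emb (c * d) = emb c * emb d)
   \<and> (\<forall>a. 0 \<le> nA a) \<and> (\<forall>a. nA a = 0 \<longleftrightarrow> a = 0)
   \<and> (\<forall>a b. nA (a + b) \<le> max (nA a) (nA b)) \<and> (\<forall>a b. nA (a * b) \<le> nA a * nA b)
   \<and> (\<forall>c a. nA (emb c * a) = v c * nA a)"

text \<open>A (with k-structure emb and norm nA) is strictly k-affinoid: there is an admissible
  epimorphism T_n \<rightarrow> A, i.e. a surjective k-algebra map whose residue norm is equivalent to nA
  (hence nA is a complete norm).\<close>
definition strictly_affinoid :: "('k::field \<Rightarrow> real) \<Rightarrow> ('k \<Rightarrow> 'a::comm_ring_1) \<Rightarrow> ('a \<Rightarrow> real) \<Rightarrow> bool" where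
  "strictly_affinoid v emb nA \<longleftrightarrow> k_alg_norm v emb nA \<and>
     (\<exists>n \<phi>. tate_epi v emb n \<phi> \<and>
        (\<exists>c C. 0 < c \<and> 0 < C \<and> (\<forall>a. c * residue_norm v n \<phi> a \<le> nA a \<and> nA a \<le> C * residue_norm v n \<phi> a)))"

definition spectral_norm :: "('a::comm_ring_1 \<Rightarrow> real) \<Rightarrow> 'a \<Rightarrow> real" where
  "spectral_norm nA a = lim (\<lambda>m. root (Suc m) (nA (a ^ Suc m)))"

definition berk_spectrum :: "('a::comm_ring_1 \<Rightarrow> real) \<Rightarrow> ('a \<Rightarrow> real) set" where
  "berk_spectrum nA = {x. (\<forall>a. 0 \<le> x a) \<and> x 0 = 0 \<and> x 1 = 1
      \<and> (\<forall>a b. x (a + b) \<le> x a + x b) \<and> (\<forall>a b. x (a * b) = x a * x b)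
      \<and> (\<exists>C. \<forall>a. x a \<le> C * nA a)}"

definition berk_top :: "('a::comm_ring_1 \<Rightarrow> real) \<Rightarrow> ('a \<Rightarrow> real) topology" where
  "berk_top nA = subtopology (product_topology (\<lambda>_. euclideanreal) UNIV) (berk_spectrum nA)"

definition A_circ :: "('a::comm_ring_1 \<Rightarrow> real) \<Rightarrow> 'a ring" where
  "A_circ nA = \<lparr>carrier = {a. spectral_norm nA a \<le> 1}, mult = (*), one = 1, zero = 0, add = (+)\<rparr>"

definition I_eps :: "('a::comm_ring_1 \<Rightarrow> real) \<Rightarrow> real \<Rightarrow> 'a set" where
  "I_eps nA \<epsilon> = {a. spectral_norm nA a < \<epsilon>}"

definition A_eps :: "('a::comm_ring_1 \<Rightarrow> real) \<Rightarrow> real \<Rightarrow> 'a set ring" where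
  "A_eps nA \<epsilon> = A_circ nA Quot I_eps nA \<epsilon>"

definition Id_eps :: "('a::comm_ring_1 \<Rightarrow> real) \<Rightarrow> real \<Rightarrow> 'a set set set" where
  "Id_eps nA \<epsilon> = {J. ideal J (A_eps nA \<epsilon>) \<and> J \<noteq> carrier (A_eps nA \<epsilon>)}"

definition red_eps :: "('a::comm_ring_1 \<Rightarrow> real) \<Rightarrow> real \<Rightarrow> ('a \<Rightarrow> real) \<Rightarrow> 'a set set" where
  "red_eps nA \<epsilon> x = (\<lambda>a. a_r_coset (A_circ nA) (I_eps nA \<epsilon>) a) ` {a \<in> carrier (A_circ nA). x a < \<epsilon>}"

inductive_set bool_comb :: "'b set \<Rightarrow> 'b set set \<Rightarrow> 'b set set" for X B where
  basic: "S \<in> B \<Longrightarrow> S \<in> bool_comb X B"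
| empty: "{} \<in> bool_comb X B"
| compl: "S \<in> bool_comb X B \<Longrightarrow> X - S \<in> bool_comb X B"
| union: "S \<in> bool_comb X B \<Longrightarrow> T \<in> bool_comb X B \<Longrightarrow> S \<union> T \<in> bool_comb X B"

definition constructible_Id :: "('a::comm_ring_1 \<Rightarrow> real) \<Rightarrow> real \<Rightarrow> 'a set set set \<Rightarrow> bool" where
  "constructible_Id nA \<epsilon> V \<longleftrightarrow> V \<in> bool_comb (Id_eps nA \<epsilon>)
      {{J \<in> Id_eps nA \<epsilon>. g \<in> J} | g. g \<in> carrier (A_eps nA \<epsilon>)}"

end

theory Submission
  imports Defs
begin

definition ultra_seminorm :: "('a::comm_ring_1 \<Rightarrow> real) \<Rightarrow> bool" where
  "ultra_seminorm p \<longleftrightarrow> (\<forall>a. 0 \<le> p a) \<and> p 0 = 0 \<and> (\<forall>a b. p (a + b) \<le> max (p a) (p b))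
     \<and> (\<forall>a b. p (a * b) \<le> p a * p b)"

lemma le_of_power_le_mult_power:
  fixes x M :: real
  assumes "0 \<le> x" "0 \<le> M" and C: "(\<lambda>n. root n (C n)) \<longlonglongrightarrow> 1"
    and le: "\<And>n. n \<ge> 1 \<Longrightarrow> x ^ n \<le> C n * M ^ n"
  shows "x \<le> M"
proof (rule LIMSEQ_le_const)
  show "(\<lambda>n. root n (C n) * M) \<longlonglongrightarrow> M"
    using tendsto_mult_right[OF C, of M] by simp
  have "x \<le> root n (C n) * M" if "n \<ge> 1" for n
  proof -
    have "x = root n (x ^ n)" using that assms(1) by (simp add: real_root_power_cancel)
    also have "\<dots> \<le> root n (C n * M ^ n)" using le[OF that] that by simp
    also have "\<dots> = root n (C n) * M" using that assms(2) by (simp add: real_root_mult real_root_power_cancel)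
    finally show ?thesis .
  qed
  then show "\<exists>N. \<forall>n\<ge>N. x \<le> root n (C n) * M" by blast
qed

context
  fixes p :: "'a::comm_ring_1 \<Rightarrow> real"
  assumes p: "ultra_seminorm p"
begin

lemma ultra_seminorm_nonneg: "0 \<le> p a"
  and ultra_seminorm_0: "p 0 = 0"
  and ultra_seminorm_add: "p (a + b) \<le> max (p a) (p b)"
  and ultra_seminorm_mult: "p (a * b) \<le> p a * p b"
  using p unfolding ultra_seminorm_def by auto

lemma ultra_seminorm_sum_le:
  assumes "\<And>i. i \<in> I \<Longrightarrow> p (f i) \<le> B" "0 \<le> B"
  shows "p (sum f I) \<le> B"
  using assms(1)
proof (induction I rule: infinite_finite_induct)
  case (insert i I)
  have "p (sum f (insert i I)) \<le> max (p (f i)) (p (sum f I))"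
    using insert.hyps ultra_seminorm_add by simp
  also have "\<dots> \<le> B" using insert by simp
  finally show ?case .
qed (use ultra_seminorm_0 assms(2) in auto)

lemma ultra_seminorm_of_nat_mult: "p (of_nat j * a) \<le> p a"
  using ultra_seminorm_sum_le[of "{..<j}" "\<lambda>_. a" "p a"] ultra_seminorm_nonneg by simp

lemma ultra_seminorm_power_mult_le:
  assumes "q \<ge> 1"
  shows "p (a ^ (m * q)) \<le> p (a ^ m) ^ q"
  using assms
proof (induction q rule: dec_induct)
  case (step q)
  have "p (a ^ (m * Suc q)) = p (a ^ (m * q) * a ^ m)" by (simp add: power_add mult.commute)
  also have "\<dots> \<le> p (a ^ (m * q)) * p (a ^ m)" by (rule ultra_seminorm_mult)
  also have "\<dots> \<le> p (a ^ m) ^ q * p (a ^ m)" using step ultra_seminorm_nonneg by (simp add: mult_right_mono)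
  finally show ?case by (simp add: mult.commute)
qed simp

text \<open>The core of Fekete's lemma for the submultiplicative sequence \<open>p (a ^ n)\<close>: writing
  \<open>n = m q + r\<close> with \<open>r < m\<close>, one has \<open>p (a ^ n) \<le> p (a ^ m) ^ q \<cdot> K\<close>, with \<open>K\<close> bounding the
  finitely many remainder terms.\<close>
lemma root_power_eventually_less:
  assumes m: "m \<ge> 1" and t: "root m (p (a ^ m)) < t"
  shows "\<forall>\<^sub>F n in sequentially. root n (p (a ^ n)) < t"
proof -
  define w where "w = root m (p (a ^ m))"
  have w0: "0 \<le> w" unfolding w_def by (intro real_root_ge_zero ultra_seminorm_nonneg)
  have t0: "0 < t" using w0 t w_def by linarith
  have wm: "w ^ m = p (a ^ m)" unfolding w_def using m ultra_seminorm_nonneg by simp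
  define K where "K r = (if r = 0 then 1 else p (a ^ r))" for r
  have K0: "0 \<le> K r" for r unfolding K_def using ultra_seminorm_nonneg by simp
  define Kb where "Kb = (\<Sum>r<m. K r / t ^ r)"
  have Kr: "K r \<le> Kb * t ^ r" if "r < m" for r
  proof -
    have "K r / t ^ r \<le> Kb" unfolding Kb_def
      by (rule member_le_sum) (use that K0 t0 in auto)
    then show ?thesis using t0 by (simp add: field_simps)
  qed
  define c where "c = (w / t) ^ m"
  have c: "0 \<le> c" "c < 1" unfolding c_def using w0 t0 m t w_def
    by (auto simp: power_less_one_iff)
  have "(\<lambda>q. c ^ q * Kb) \<longlonglongrightarrow> 0 * Kb"
    by (intro tendsto_intros LIMSEQ_power_zero) (use c in auto)
  then have "\<forall>\<^sub>F q in sequentially. c ^ q * Kb < 1"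
    by (intro order_tendstoD(2)) auto
  then obtain Q where Q: "\<And>q. q \<ge> Q \<Longrightarrow> c ^ q * Kb < 1"
    by (auto simp: eventually_sequentially)
  show ?thesis unfolding eventually_sequentially
  proof (intro exI allI impI)
    fix n assume n: "m * (Q + 1) \<le> n"
    define q where "q = n div m"
    define r where "r = n mod m"
    have nqr: "n = m * q + r" unfolding q_def r_def by simp
    have q: "q \<ge> Q + 1" unfolding q_def using n m
      by (metis div_le_mono nonzero_mult_div_cancel_left not_one_le_zero)
    have rm: "r < m" unfolding r_def using m by simp
    have n1: "n \<ge> 1" using n m by (metis add_leE le_trans mult_le_mono1 mult_1 nat_mult_1_right)
    have "p (a ^ n) \<le> p (a ^ (m * q)) * K r"
      using ultra_seminorm_mult[of "a ^ (m * q)" "a ^ r"] by (simp add: K_def nqr power_add)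
    also have "\<dots> \<le> p (a ^ m) ^ q * K r"
      using ultra_seminorm_power_mult_le[where q = q and m = m] q K0 by (simp add: mult_right_mono)
    also have "\<dots> = t ^ (m * q) * c ^ q * K r"
      unfolding c_def wm[symmetric] using t0 by (simp add: power_mult power_divide field_simps)
    also have "\<dots> \<le> t ^ (m * q) * c ^ q * (Kb * t ^ r)"
      using Kr[OF rm] t0 c by (intro mult_left_mono) auto
    also have "\<dots> = t ^ n * (c ^ q * Kb)" by (simp add: nqr power_add)
    also have "\<dots> < t ^ n" using Q[of q] q t0 by simp
    finally have "root n (p (a ^ n)) ^ n < t ^ n" using n1 ultra_seminorm_nonneg by simp
    then show "root n (p (a ^ n)) < t" using t0 by (meson less_le power_less_imp_less_base)
  qed
qed

lemma root_power_tendsto_Inf: "(\<lambda>n. root n (p (a ^ n))) \<longlonglongrightarrow> (INF n\<in>{1..}. root n (p (a ^ n)))"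
proof (rule order_tendstoI)
  have bdd: "bdd_below ((\<lambda>n. root n (p (a ^ n))) ` {1..})"
    by (rule bdd_belowI[of _ 0]) (auto intro: real_root_ge_zero ultra_seminorm_nonneg)
  {
  fix y assume "y < (INF n\<in>{1..}. root n (p (a ^ n)))"
  then show "\<forall>\<^sub>F n in sequentially. y < root n (p (a ^ n))"
    using bdd by (auto simp: eventually_sequentially intro: less_le_trans cINF_lower)
  next
  fix t assume "(INF n\<in>{1..}. root n (p (a ^ n))) < t"
  then obtain m where "m \<ge> 1" "root m (p (a ^ m)) < t"
    using bdd by (auto simp: cINF_less_iff)
  then show "\<forall>\<^sub>F n in sequentially. root n (p (a ^ n)) < t"
    by (rule root_power_eventually_less)
  }
qed

lemma spectral_norm_eq_Inf: "spectral_norm p a = (INF n\<in>{1..}. root n (p (a ^ n)))"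
  unfolding spectral_norm_def by (rule limI, rule LIMSEQ_Suc, rule root_power_tendsto_Inf)

lemma spectral_norm_tendsto: "(\<lambda>n. root n (p (a ^ n))) \<longlonglongrightarrow> spectral_norm p a"
  unfolding spectral_norm_eq_Inf by (rule root_power_tendsto_Inf)

lemma spectral_norm_le_root: "n \<ge> 1 \<Longrightarrow> spectral_norm p a \<le> root n (p (a ^ n))"
  unfolding spectral_norm_eq_Inf
  by (rule cINF_lower, rule bdd_belowI[of _ 0]) (auto intro: real_root_ge_zero ultra_seminorm_nonneg)

lemma spectral_norm_le: "spectral_norm p a \<le> p a"
  using spectral_norm_le_root[of 1] by simp

lemma spectral_norm_nonneg: "0 \<le> spectral_norm p a"
  by (rule LIMSEQ_le_const[OF spectral_norm_tendsto])
    (auto intro!: real_root_ge_zero ultra_seminorm_nonneg)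

lemma spectral_norm_0: "spectral_norm p 0 = 0"
  using spectral_norm_le[of 0] spectral_norm_nonneg[of 0] ultra_seminorm_0 by simp

lemma spectral_norm_1: "0 < p 1 \<Longrightarrow> spectral_norm p 1 = 1"
  using spectral_norm_tendsto[of 1] LIMSEQ_root_const[of "p 1"] LIMSEQ_unique by auto

lemma spectral_norm_mult_le: "spectral_norm p (a * b) \<le> spectral_norm p a * spectral_norm p b"
proof (rule LIMSEQ_le[OF spectral_norm_tendsto tendsto_mult[OF spectral_norm_tendsto spectral_norm_tendsto]])
  have "root n (p ((a * b) ^ n)) \<le> root n (p (a ^ n)) * root n (p (b ^ n))" if "n \<ge> 1" for n
    using that ultra_seminorm_mult[of "a ^ n" "b ^ n"]
    by (simp add: power_mult_distrib real_root_mult[symmetric])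
  then show "\<exists>N. \<forall>n\<ge>N. root n (p ((a * b) ^ n)) \<le> root n (p (a ^ n)) * root n (p (b ^ n))"
    by blast
qed

lemma spectral_norm_power_bound:
  assumes "0 < d"
  obtains C where "C \<ge> 1" "\<And>n. p (a ^ n) \<le> C * (spectral_norm p a + d) ^ n"
proof -
  define s where "s = spectral_norm p a + d"
  have s: "0 < s" using spectral_norm_nonneg[of a] assms unfolding s_def by simp
  have "\<forall>\<^sub>F n in sequentially. root n (p (a ^ n)) < s"
    using spectral_norm_tendsto[of a] assms by (intro order_tendstoD(2)) (auto simp: s_def)
  then obtain N where N: "\<And>n. n \<ge> N \<Longrightarrow> root n (p (a ^ n)) < s"
    by (auto simp: eventually_sequentially)
  define C where "C = 1 + (\<Sum>n\<le>N. p (a ^ n) / s ^ n)"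
  have sum0: "0 \<le> (\<Sum>n\<le>N. p (a ^ n) / s ^ n)"
    using s ultra_seminorm_nonneg by (intro sum_nonneg) auto
  have "p (a ^ n) \<le> C * s ^ n" for n
  proof (cases "n \<le> N")
    case True
    then have "p (a ^ n) / s ^ n \<le> (\<Sum>n\<le>N. p (a ^ n) / s ^ n)"
      using s ultra_seminorm_nonneg by (intro member_le_sum) auto
    then have "p (a ^ n) \<le> (C - 1) * s ^ n" using s by (simp add: C_def field_simps)
    also have "\<dots> \<le> C * s ^ n" using s by (simp add: algebra_simps)
    finally show ?thesis .
  next
    case False
    then have "root n (p (a ^ n)) ^ n \<le> s ^ n"
      using N[of n] by (intro power_mono) (auto intro: real_root_ge_zero ultra_seminorm_nonneg)
    then have "p (a ^ n) \<le> s ^ n" using False ultra_seminorm_nonneg by simp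
    also have "\<dots> \<le> C * s ^ n" using sum0 s by (simp add: C_def distrib_right)
    finally show ?thesis .
  qed
  moreover have "C \<ge> 1" using sum0 by (simp add: C_def)
  ultimately show ?thesis using that unfolding s_def by blast
qed

lemma spectral_norm_add_le_max:
  "spectral_norm p (a + b) \<le> max (spectral_norm p a) (spectral_norm p b)"
proof (rule field_le_epsilon)
  fix d :: real assume d: "0 < d"
  define M where "M = max (spectral_norm p a) (spectral_norm p b) + d"
  have M: "0 \<le> M" "spectral_norm p a + d \<le> M" "spectral_norm p b + d \<le> M"
    using spectral_norm_nonneg[of a] d by (auto simp: M_def)
  obtain Ca where Ca: "Ca \<ge> 1" "\<And>n. p (a ^ n) \<le> Ca * (spectral_norm p a + d) ^ n"
    using spectral_norm_power_bound[OF d] by blast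
  obtain Cb where Cb: "Cb \<ge> 1" "\<And>n. p (b ^ n) \<le> Cb * (spectral_norm p b + d) ^ n"
    using spectral_norm_power_bound[OF d] by blast
  have term_le: "p (of_nat (n choose k) * a ^ k * b ^ (n - k)) \<le> (Ca * Cb) * M ^ n" if "k \<le> n" for n k
  proof -
    have "p (of_nat (n choose k) * a ^ k * b ^ (n - k))
        \<le> p (of_nat (n choose k) * a ^ k) * p (b ^ (n - k))"
      by (rule ultra_seminorm_mult)
    also have "\<dots> \<le> p (a ^ k) * p (b ^ (n - k))"
      by (intro mult_right_mono ultra_seminorm_of_nat_mult ultra_seminorm_nonneg)
    also have "\<dots> \<le> (Ca * M ^ k) * (Cb * M ^ (n - k))"
    proof (intro mult_mono)
      have "p (a ^ k) \<le> Ca * (spectral_norm p a + d) ^ k" by (rule Ca(2))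
      also have "\<dots> \<le> Ca * M ^ k"
        using Ca(1) M spectral_norm_nonneg[of a] d by (intro mult_left_mono power_mono) auto
      finally show "p (a ^ k) \<le> Ca * M ^ k" .
      have "p (b ^ (n - k)) \<le> Cb * (spectral_norm p b + d) ^ (n - k)" by (rule Cb(2))
      also have "\<dots> \<le> Cb * M ^ (n - k)"
        using Cb(1) M spectral_norm_nonneg[of b] d by (intro mult_left_mono power_mono) auto
      finally show "p (b ^ (n - k)) \<le> Cb * M ^ (n - k)" .
    qed (use Ca M ultra_seminorm_nonneg in auto)
    also have "\<dots> = (Ca * Cb) * M ^ n" using that by (simp add: power_add[symmetric] field_simps)
    finally show ?thesis .
  qed
  show "spectral_norm p (a + b) \<le> max (spectral_norm p a) (spectral_norm p b) + d"
    unfolding M_def[symmetric]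
  proof (rule le_of_power_le_mult_power[where C = "\<lambda>_. Ca * Cb"])
    show "(\<lambda>n. root n (Ca * Cb)) \<longlonglongrightarrow> 1" using Ca Cb by (intro LIMSEQ_root_const) simp
    fix n :: nat assume n: "n \<ge> 1"
    have "spectral_norm p (a + b) ^ n \<le> root n (p ((a + b) ^ n)) ^ n"
      by (intro power_mono spectral_norm_le_root n spectral_norm_nonneg)
    also have "\<dots> = p ((a + b) ^ n)" using n ultra_seminorm_nonneg by simp
    also have "\<dots> \<le> (Ca * Cb) * M ^ n"
      unfolding binomial_ring using term_le Ca Cb M by (intro ultra_seminorm_sum_le) auto
    finally show "spectral_norm p (a + b) ^ n \<le> (Ca * Cb) * M ^ n" .
  qed (use spectral_norm_nonneg M in auto)
qed

lemma spectral_norm_power: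
  assumes "0 < p 1"
  shows "spectral_norm p (a ^ k) = spectral_norm p a ^ k"
proof (cases "k = 0")
  case True then show ?thesis using spectral_norm_1[OF assms] by simp
next
  case False
  have "(\<lambda>n. root (k * n) (p (a ^ (k * n)))) \<longlonglongrightarrow> spectral_norm p a"
    using LIMSEQ_subseq_LIMSEQ[OF spectral_norm_tendsto, of "\<lambda>n. k * n" a] False
    by (simp add: o_def strict_mono_def)
  then have "(\<lambda>n. root (k * n) (p (a ^ (k * n))) ^ k) \<longlonglongrightarrow> spectral_norm p a ^ k"
    by (intro tendsto_intros)
  moreover have "root (k * n) (p (a ^ (k * n))) ^ k = root n (p ((a ^ k) ^ n))" for n
  proof (cases "n = 0")
    case False
    have "root (k * n) (p (a ^ (k * n))) ^ k = root n (root k (p (a ^ (k * n)))) ^ k"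
      by (simp add: mult.commute[of k] real_root_mult_exp)
    also have "\<dots> = root n (root k (p (a ^ (k * n))) ^ k)"
      using False by (intro real_root_power[symmetric]) simp
    also have "\<dots> = root n (p ((a ^ k) ^ n))"
      using \<open>k \<noteq> 0\<close> ultra_seminorm_nonneg by (simp add: power_mult)
    finally show ?thesis .
  qed (use \<open>k \<noteq> 0\<close> in simp)
  ultimately show ?thesis using spectral_norm_tendsto[of "a ^ k"] LIMSEQ_unique by auto
qed

end

context
  fixes v :: "'k::field \<Rightarrow> real"
  assumes v: "nonarch_abs v"
begin

lemma nonarch_abs_nonneg: "0 \<le> v x"
  and nonarch_abs_eq_0_iff: "v x = 0 \<longleftrightarrow> x = 0"
  and nonarch_abs_mult: "v (x * y) = v x * v y"
  using v unfolding nonarch_abs_def by auto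

lemma nonarch_abs_pos: "x \<noteq> 0 \<Longrightarrow> 0 < v x"
  using nonarch_abs_nonneg[of x] nonarch_abs_eq_0_iff[of x] by linarith

lemma nonarch_abs_1: "v 1 = 1"
  using nonarch_abs_mult[of 1 1] nonarch_abs_pos[of 1] by simp

lemma nonarch_abs_power: "v (x ^ n) = v x ^ n"
  by (induction n) (simp_all add: nonarch_abs_1 nonarch_abs_mult)

lemma nonarch_abs_inverse: "v (inverse x) = inverse (v x)"
proof (cases "x = 0")
  case False
  then have "v x * v (inverse x) = 1" by (simp flip: nonarch_abs_mult add: nonarch_abs_1)
  then show ?thesis by (simp add: inverse_unique)
qed (use nonarch_abs_eq_0_iff[of 0] in simp)

lemma nonarch_abs_divide: "v (x / y) = v x / v y"
  by (simp add: divide_inverse nonarch_abs_mult nonarch_abs_inverse)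

lemma nonarch_abs_power_int: "v (x powi j) = v x powi j"
  by (simp add: power_int_def nonarch_abs_power nonarch_abs_inverse)

end

context
  fixes v :: "'k::field \<Rightarrow> real" and emb :: "'k \<Rightarrow> 'a::comm_ring_1" and nA :: "'a \<Rightarrow> real"
  assumes kn: "k_alg_norm v emb nA"
begin

lemma k_alg_norm_ultra_seminorm: "ultra_seminorm nA"
  using kn unfolding k_alg_norm_def ultra_seminorm_def by auto

lemma k_alg_norm_1_pos: "0 < nA 1"
  using kn unfolding k_alg_norm_def by (metis less_eq_real_def one_neq_zero)

lemma k_alg_norm_emb_mult: "nA (emb c * a) = v c * nA a"
  and emb_1: "emb 1 = 1"
  and emb_mult: "emb (c * d) = emb c * emb d"
  and emb_add: "emb (c + d) = emb c + emb d"
  using kn unfolding k_alg_norm_def by auto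

lemma emb_0: "emb 0 = 0"
  using emb_add[of 0 0] by simp

lemma emb_power: "emb (c ^ n) = emb c ^ n"
  by (induction n) (simp_all add: emb_1 emb_mult)

lemma spectral_norm_emb_mult:
  assumes v: "nonarch_abs v"
  shows "spectral_norm nA (emb c * a) = v c * spectral_norm nA a"
proof -
  note nA = k_alg_norm_ultra_seminorm
  have "root n (nA ((emb c * a) ^ n)) = v c * root n (nA (a ^ n))" if "n \<ge> 1" for n
    using that nonarch_abs_nonneg[OF v, of c]
    by (simp add: power_mult_distrib flip: emb_power
        add: k_alg_norm_emb_mult nonarch_abs_power[OF v] real_root_mult real_root_power_cancel)
  then have "\<forall>\<^sub>F n in sequentially. v c * root n (nA (a ^ n)) = root n (nA ((emb c * a) ^ n))"
    by (auto simp: eventually_sequentially intro!: exI[of _ 1])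
  from Lim_transform_eventually[OF tendsto_mult_left[OF spectral_norm_tendsto[OF nA]] this]
  show ?thesis using spectral_norm_tendsto[OF nA, of "emb c * a"] LIMSEQ_unique by blast
qed

context
  fixes y :: "'a \<Rightarrow> real"
  assumes y: "y \<in> berk_spectrum nA"
begin

lemma berk_spectrum_nonneg: "0 \<le> y a"
  and berk_spectrum_0: "y 0 = 0"
  and berk_spectrum_1: "y 1 = 1"
  and berk_spectrum_add: "y (a + b) \<le> y a + y b"
  and berk_spectrum_mult: "y (a * b) = y a * y b"
  and berk_spectrum_bounded: "\<exists>C. \<forall>a. y a \<le> C * nA a"
  using y unfolding berk_spectrum_def by auto

lemma berk_spectrum_power: "y (a ^ n) = y a ^ n"
  by (induction n) (simp_all add: berk_spectrum_1 berk_spectrum_mult)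

lemma berk_spectrum_le_spectral_norm: "y a \<le> spectral_norm nA a"
proof -
  note nA = k_alg_norm_ultra_seminorm
  obtain C where C: "\<And>a. y a \<le> C * nA a" using berk_spectrum_bounded by blast
  have C0: "0 < C"
    using C[of 1] berk_spectrum_1 k_alg_norm_1_pos by (smt (verit) mult_nonpos_nonneg)
  have "y a \<le> root n C * root n (nA (a ^ n))" if "n \<ge> 1" for n
  proof -
    have "root n (y a ^ n) \<le> root n (C * nA (a ^ n))"
      using C[of "a ^ n"] that by (simp add: berk_spectrum_power)
    then show ?thesis using that berk_spectrum_nonneg by (simp add: real_root_power_cancel real_root_mult)
  qed
  then show ?thesis
    by (intro LIMSEQ_le_const[where X = "\<lambda>n. root n C * root n (nA (a ^ n))"])
      (use tendsto_mult[OF LIMSEQ_root_const[OF C0] spectral_norm_tendsto[OF nA]] in auto)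
qed

lemma berk_spectrum_le_norm: "y a \<le> nA a"
  using berk_spectrum_le_spectral_norm spectral_norm_le[OF k_alg_norm_ultra_seminorm] order_trans by blast

lemma berk_spectrum_sum_le: "y (sum f I) \<le> (\<Sum>i\<in>I. y (f i))"
  by (induction I rule: infinite_finite_induct)
    (auto simp: berk_spectrum_0 intro: order_trans[OF berk_spectrum_add])

lemma berk_spectrum_add_le_max: "y (a + b) \<le> max (y a) (y b)"
proof (rule le_of_power_le_mult_power[where C = "\<lambda>n. 2 * nA 1 * real n"])
  define M where "M = max (y a) (y b)"
  show "0 \<le> y (a + b)" "0 \<le> M" using berk_spectrum_nonneg by (auto simp: M_def le_max_iff_disj)
  show "(\<lambda>n. root n (2 * nA 1 * real n)) \<longlonglongrightarrow> 1"
    using tendsto_mult[OF LIMSEQ_root_const LIMSEQ_root, of "2 * nA 1"] k_alg_norm_1_pos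
    by (simp add: real_root_mult)
  fix n :: nat assume n: "n \<ge> 1"
  have "y (a + b) ^ n \<le> (\<Sum>k\<le>n. y (of_nat (n choose k) * a ^ k * b ^ (n - k)))"
    unfolding berk_spectrum_power[symmetric] binomial_ring by (rule berk_spectrum_sum_le)
  also have "\<dots> \<le> (\<Sum>k\<le>n. nA 1 * M ^ n)"
  proof (rule sum_mono)
    fix k assume k: "k \<in> {..n}"
    have "y (of_nat (n choose k)) \<le> nA (of_nat (n choose k) * 1)"
      using berk_spectrum_le_norm by simp
    also have "\<dots> \<le> nA 1" by (rule ultra_seminorm_of_nat_mult[OF k_alg_norm_ultra_seminorm])
    finally have "y (of_nat (n choose k)) * (y a ^ k * y b ^ (n - k)) \<le> nA 1 * (M ^ k * M ^ (n - k))"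
      using berk_spectrum_nonneg k_alg_norm_1_pos
      by (intro mult_mono power_mono) (auto simp: M_def le_max_iff_disj)
    then show "y (of_nat (n choose k) * a ^ k * b ^ (n - k)) \<le> nA 1 * M ^ n"
      using k by (simp add: berk_spectrum_mult berk_spectrum_power mult.assoc flip: power_add)
  qed
  also have "\<dots> = real (Suc n) * (nA 1 * M ^ n)" by simp
  also have "\<dots> \<le> (2 * real n) * (nA 1 * M ^ n)"
    using n k_alg_norm_1_pos \<open>0 \<le> M\<close> by (intro mult_right_mono) auto
  finally show "y (a + b) ^ n \<le> 2 * nA 1 * real n * M ^ n" by (simp add: mult_ac)
qed

lemma berk_spectrum_emb:
  assumes v: "nonarch_abs v"
  shows "y (emb c) = v c"
proof -
  have le: "y (emb d) \<le> v d" for d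
    using berk_spectrum_le_spectral_norm[of "emb d * 1"] spectral_norm_emb_mult[OF v, of d 1]
      spectral_norm_1[OF k_alg_norm_ultra_seminorm k_alg_norm_1_pos] by simp
  show ?thesis
  proof (cases "c = 0")
    case False
    have "1 = y (emb c) * y (emb (inverse c))"
      using False by (simp flip: berk_spectrum_mult emb_mult add: emb_1 berk_spectrum_1)
    also have "\<dots> \<le> y (emb c) * inverse (v c)"
      using le[of "inverse c"] berk_spectrum_nonneg by (simp add: mult_left_mono nonarch_abs_inverse[OF v])
    finally have "v c \<le> y (emb c)"
      using nonarch_abs_pos[OF v False] by (simp add: field_simps)
    then show ?thesis using le[of c] by simp
  qed (simp add: emb_0 berk_spectrum_0 nonarch_abs_eq_0_iff[OF v])
qed

end

end

lemma le_of_le_at_right_0: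
  fixes f :: "real \<Rightarrow> real"
  assumes "(f \<longlongrightarrow> L) (at_right 0)" and "\<And>d. 0 < d \<Longrightarrow> x \<le> f d"
  shows "x \<le> L"
  by (rule tendsto_lowerbound[OF assms(1)])
    (auto intro: eventually_mono[OF eventually_at_right_less] assms(2))

definition pm_seminorms :: "('a::comm_ring_1 \<Rightarrow> real) \<Rightarrow> ('a \<Rightarrow> real) set" where
  "pm_seminorms nA = {p. ultra_seminorm p \<and> p \<le> nA \<and> (\<forall>a n. p (a ^ n) = p a ^ n)}"

lemma pm_seminormsD:
  assumes "p \<in> pm_seminorms nA"
  shows "ultra_seminorm p" "p a \<le> nA a" "p (a ^ n) = p a ^ n" "p 1 = 1"
proof -
  show "ultra_seminorm p" "p a \<le> nA a" "p (a ^ n) = p a ^ n"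
    using assms unfolding pm_seminorms_def le_fun_def by auto
  have "p (1 ^ 0) = p 1 ^ 0" using assms unfolding pm_seminorms_def by blast
  then show "p 1 = 1" by simp
qed

lemma spectral_norm_in_pm_seminorms:
  assumes "ultra_seminorm nA" "0 < nA 1"
  shows "spectral_norm nA \<in> pm_seminorms nA"
  unfolding pm_seminorms_def ultra_seminorm_def le_fun_def
  using spectral_norm_nonneg[OF assms(1)] spectral_norm_0[OF assms(1)]
    spectral_norm_add_le_max[OF assms(1)] spectral_norm_mult_le[OF assms(1)]
    spectral_norm_le[OF assms(1)] spectral_norm_power[OF assms] by simp

context
  fixes C :: "('a::comm_ring_1 \<Rightarrow> real) set" and nA :: "'a \<Rightarrow> real"
  assumes C: "C \<subseteq> pm_seminorms nA" and C_ne: "C \<noteq> {}"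
    and chain: "Complete_Partial_Order.chain (\<le>) C"
begin

lemma chain_Inf_bdd: "bdd_below ((\<lambda>p. p a) ` C)"
  using C pm_seminormsD(1) ultra_seminorm_nonneg by (intro bdd_belowI[of _ 0]) blast

lemma chain_Inf_le: "p \<in> C \<Longrightarrow> Inf C a \<le> p a"
  using chain_Inf_bdd by (auto intro: cINF_lower)

lemma chain_Inf_greatest: "(\<And>p. p \<in> C \<Longrightarrow> z \<le> p a) \<Longrightarrow> z \<le> Inf C a"
  using C_ne by (auto intro: cINF_greatest)

lemma chain_Inf_approx:
  assumes "0 < d"
  obtains p where "p \<in> C" "p a < Inf C a + d" "p b < Inf C b + d"
proof -
  obtain p1 where p1: "p1 \<in> C" "p1 a < Inf C a + d"
    using cINF_less_iff[OF C_ne chain_Inf_bdd, of a "Inf C a + d"] assms by auto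
  obtain p2 where p2: "p2 \<in> C" "p2 b < Inf C b + d"
    using cINF_less_iff[OF C_ne chain_Inf_bdd, of b "Inf C b + d"] assms by auto
  from chainD[OF chain p1(1) p2(1)] show ?thesis
  proof
    assume "p1 \<le> p2"
    then have "p1 b < Inf C b + d" using p2(2) le_funD le_less_trans by metis
    then show ?thesis using that p1 by blast
  next
    assume "p2 \<le> p1"
    then have "p2 a < Inf C a + d" using p1(2) le_funD le_less_trans by metis
    then show ?thesis using that p2 by blast
  qed
qed

lemma chain_Inf_in_pm_seminorms: "Inf C \<in> pm_seminorms nA"
proof -
  note pm = pm_seminormsD[OF subsetD[OF C]]
  note p = ultra_seminorm_nonneg[OF pm(1)] ultra_seminorm_0[OF pm(1)]
    ultra_seminorm_add[OF pm(1)] ultra_seminorm_mult[OF pm(1)]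
  obtain p0 where p0: "p0 \<in> C" using C_ne by blast
  have nonneg: "0 \<le> Inf C a" for a by (rule chain_Inf_greatest) (rule p(1))
  have "Inf C (a + b) \<le> max (Inf C a) (Inf C b)" for a b
  proof (rule le_of_le_at_right_0)
    fix d :: real assume "0 < d"
    then obtain p where p': "p \<in> C" "p a < Inf C a + d" "p b < Inf C b + d" by (rule chain_Inf_approx)
    have "Inf C (a + b) \<le> max (p a) (p b)" using chain_Inf_le[OF p'(1)] p(3)[OF p'(1)] order_trans by blast
    also have "\<dots> \<le> max (Inf C a) (Inf C b) + d" using p'(2,3) by (auto simp: max_def)
    finally show "Inf C (a + b) \<le> max (Inf C a) (Inf C b) + d" .
  qed (auto intro!: tendsto_eq_intros)
  moreover have "Inf C (a * b) \<le> Inf C a * Inf C b" for a b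
  proof (rule le_of_le_at_right_0)
    fix d :: real assume "0 < d"
    then obtain p where p': "p \<in> C" "p a < Inf C a + d" "p b < Inf C b + d" by (rule chain_Inf_approx)
    have "Inf C (a * b) \<le> p a * p b" using chain_Inf_le[OF p'(1)] p(4)[OF p'(1)] order_trans by blast
    also have "\<dots> \<le> (Inf C a + d) * (Inf C b + d)"
      using p'(2,3) p(1)[OF p'(1), of b] nonneg[of a] \<open>0 < d\<close> by (intro mult_mono) linarith+
    finally show "Inf C (a * b) \<le> (Inf C a + d) * (Inf C b + d)" .
  qed (auto intro!: tendsto_eq_intros)
  moreover have "Inf C (a ^ n) = Inf C a ^ n" for a n
  proof (rule antisym)
    show "Inf C (a ^ n) \<le> Inf C a ^ n"
    proof (rule le_of_le_at_right_0)
      fix d :: real assume "0 < d"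
      then obtain p where p': "p \<in> C" "p a < Inf C a + d" by (rule chain_Inf_approx)
      have "Inf C (a ^ n) \<le> p a ^ n" using chain_Inf_le[OF p'(1)] pm(3)[OF p'(1)] by metis
      also have "\<dots> \<le> (Inf C a + d) ^ n" using p'(2) p(1)[OF p'(1)] by (intro power_mono) auto
      finally show "Inf C (a ^ n) \<le> (Inf C a + d) ^ n" .
    qed (auto intro!: tendsto_eq_intros)
    have "Inf C a ^ n \<le> p (a ^ n)" if "p \<in> C" for p
      using power_mono[OF chain_Inf_le[OF that] nonneg] pm(3)[OF that] by simp
    then show "Inf C a ^ n \<le> Inf C (a ^ n)" by (rule chain_Inf_greatest)
  qed
  moreover have "Inf C a \<le> nA a" for a
    using chain_Inf_le[OF p0] pm(2)[OF p0] order_trans by blast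
  moreover have "Inf C 0 = 0"
    using chain_Inf_le[OF p0, of 0] p(2)[OF p0] nonneg[of 0] by simp
  ultimately show ?thesis
    unfolding pm_seminorms_def ultra_seminorm_def le_fun_def using nonneg by blast
qed

end

lemma pm_seminorms_has_minimal:
  assumes "ultra_seminorm nA" "0 < nA 1"
  obtains m where "m \<in> pm_seminorms nA" "\<And>p. p \<in> pm_seminorms nA \<Longrightarrow> p \<le> m \<Longrightarrow> p = m"
proof -
  let ?R = "relation_of (\<lambda>p q. q \<le> p) (pm_seminorms nA)"
  have "\<exists>m\<in>pm_seminorms nA. \<forall>p\<in>pm_seminorms nA. p \<le> m \<longrightarrow> p = m"
  proof (rule predicate_Zorn)
    show "partial_order_on (pm_seminorms nA) ?R"
      by (rule partial_order_on_relation_ofI) auto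
    fix C assume C: "C \<in> Chains ?R"
    show "\<exists>u\<in>pm_seminorms nA. \<forall>p\<in>C. u \<le> p"
    proof (cases "C = {}")
      case True
      then show ?thesis using spectral_norm_in_pm_seminorms[OF assms] by blast
    next
      case False
      have CS: "C \<subseteq> pm_seminorms nA" by (rule Chains_relation_of[OF C])
      moreover have "Complete_Partial_Order.chain (\<le>) C"
        using C unfolding Chains_def relation_of_def by (auto intro: chainI)
      ultimately show ?thesis
        using chain_Inf_in_pm_seminorms chain_Inf_le False by (blast intro: le_funI)
    qed
  qed
  then show ?thesis using that by blast
qed

definition shifted_seminorm :: "('a::comm_ring_1 \<Rightarrow> real) \<Rightarrow> 'a \<Rightarrow> 'a \<Rightarrow> real" where
  "shifted_seminorm m a c = (INF n. m (a ^ n * c) / m a ^ n)"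

context
  fixes m :: "'a::comm_ring_1 \<Rightarrow> real" and nA :: "'a \<Rightarrow> real" and a :: 'a
  assumes m: "m \<in> pm_seminorms nA" and a: "0 < m a"
begin

lemma shifted_seminorm_tendsto: "(\<lambda>n. m (a ^ n * c) / m a ^ n) \<longlonglongrightarrow> shifted_seminorm m a c"
proof -
  note pm = pm_seminormsD[OF m]
  have "decseq (\<lambda>n. m (a ^ n * c) / m a ^ n)"
  proof (rule decseq_SucI)
    fix n
    have "m (a ^ Suc n * c) \<le> m a * m (a ^ n * c)"
      using ultra_seminorm_mult[OF pm(1), of a "a ^ n * c"] by (simp add: mult.assoc)
    then show "m (a ^ Suc n * c) / m a ^ Suc n \<le> m (a ^ n * c) / m a ^ n"
      using a by (simp add: field_simps)
  qed
  then show ?thesis unfolding shifted_seminorm_def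
    by (rule LIMSEQ_decseq_INF[rotated])
      (use a ultra_seminorm_nonneg[OF pm(1)] in \<open>auto intro!: bdd_belowI[of _ 0]\<close>)
qed

lemma shifted_seminorm_le: "shifted_seminorm m a c \<le> m (a ^ n * c) / m a ^ n"
  unfolding shifted_seminorm_def using a ultra_seminorm_nonneg[OF pm_seminormsD(1)[OF m]]
  by (intro cINF_lower bdd_belowI[of _ 0]) auto

lemma shifted_seminorm_power: "shifted_seminorm m a (c ^ k) = shifted_seminorm m a c ^ k"
proof (cases "k = 0")
  case True
  have "(\<lambda>n. m (a ^ n * 1) / m a ^ n) = (\<lambda>n. 1)"
    using a pm_seminormsD(3)[OF m, of a] by simp
  then have "(\<lambda>n. 1) \<longlonglongrightarrow> shifted_seminorm m a 1" using shifted_seminorm_tendsto[of 1] by simp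
  then show ?thesis using True LIMSEQ_unique[OF _ tendsto_const] by simp
next
  case False
  have "(\<lambda>n. m (a ^ (k * n) * c ^ k) / m a ^ (k * n)) \<longlonglongrightarrow> shifted_seminorm m a (c ^ k)"
    using LIMSEQ_subseq_LIMSEQ[OF shifted_seminorm_tendsto, of "\<lambda>n. k * n"] False
    by (simp add: o_def strict_mono_def)
  moreover have "m (a ^ (k * n) * c ^ k) / m a ^ (k * n) = (m (a ^ n * c) / m a ^ n) ^ k" for n
  proof -
    have "a ^ (k * n) * c ^ k = (a ^ n * c) ^ k" "m a ^ (k * n) = (m a ^ n) ^ k"
      by (metis mult.commute power_mult power_mult_distrib)+
    then show ?thesis using pm_seminormsD(3)[OF m, of "a ^ n * c" k] by (simp add: power_divide)
  qed
  ultimately have "(\<lambda>n. (m (a ^ n * c) / m a ^ n) ^ k) \<longlonglongrightarrow> shifted_seminorm m a (c ^ k)" by simp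
  then show ?thesis using LIMSEQ_unique[OF _ tendsto_power[OF shifted_seminorm_tendsto]] by blast
qed

lemma shifted_seminorm_in_pm_seminorms: "shifted_seminorm m a \<in> pm_seminorms nA"
proof -
  note pm = pm_seminormsD[OF m]
  note mn = ultra_seminorm_nonneg[OF pm(1)] ultra_seminorm_0[OF pm(1)]
    ultra_seminorm_add[OF pm(1)] ultra_seminorm_mult[OF pm(1)]
  let ?t = "\<lambda>c n. m (a ^ n * c) / m a ^ n"
  have nonneg: "0 \<le> shifted_seminorm m a c" for c
    using a mn(1) by (intro LIMSEQ_le_const[OF shifted_seminorm_tendsto]) auto
  have "shifted_seminorm m a (b + c) \<le> max (shifted_seminorm m a b) (shifted_seminorm m a c)" for b c
  proof (rule LIMSEQ_le_const[OF tendsto_max[OF shifted_seminorm_tendsto shifted_seminorm_tendsto]])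
    have "?t (b + c) n \<le> max (?t b n) (?t c n)" for n
      using divide_right_mono[OF mn(3)[of "a ^ n * b" "a ^ n * c"], of "m a ^ n"] a
      by (simp add: distrib_left max_divide_distrib_right)
    then show "\<exists>N. \<forall>n\<ge>N. shifted_seminorm m a (b + c) \<le> max (?t b n) (?t c n)"
      using shifted_seminorm_le order_trans by blast
  qed
  moreover have "shifted_seminorm m a (b * c) \<le> shifted_seminorm m a b * shifted_seminorm m a c" for b c
  proof (rule LIMSEQ_le_const[OF tendsto_mult[OF shifted_seminorm_tendsto shifted_seminorm_tendsto]])
    have "?t (b * c) (2 * n) \<le> ?t b n * ?t c n" for n
    proof -
      have sq: "a ^ (2 * n) = a ^ n * a ^ n" "m a ^ (2 * n) = m a ^ n * m a ^ n"
        by (simp_all only: mult_2 power_add)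
      have "?t (b * c) (2 * n) = m ((a ^ n * b) * (a ^ n * c)) / (m a ^ n * m a ^ n)"
        unfolding sq by (simp add: mult_ac)
      also have "\<dots> \<le> m (a ^ n * b) * m (a ^ n * c) / (m a ^ n * m a ^ n)"
        using a by (intro divide_right_mono mn(4)) simp
      finally show ?thesis by simp
    qed
    then show "\<exists>N. \<forall>n\<ge>N. shifted_seminorm m a (b * c) \<le> ?t b n * ?t c n"
      using shifted_seminorm_le order_trans by blast
  qed
  moreover have "shifted_seminorm m a c \<le> nA c" for c
    using shifted_seminorm_le[of c 0] pm(2)[of c] by simp
  moreover have "shifted_seminorm m a 0 = 0"
    using shifted_seminorm_le[of 0 0] nonneg[of 0] mn(2) by simp
  ultimately show ?thesis
    unfolding pm_seminorms_def ultra_seminorm_def le_fun_def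
    using nonneg shifted_seminorm_power by blast
qed

end

text \<open>Berkovich's argument: for \<open>m a > 0\<close> the seminorm \<open>c \<mapsto> lim m (a\<^sup>n c) / m(a)\<^sup>n\<close> is again in
  \<open>pm_seminorms nA\<close> and lies below \<open>m\<close>, so by minimality it is \<open>m\<close>; at \<open>n = 1\<close> this gives
  \<open>m a \<cdot> m c \<le> m (a c)\<close>.\<close>
lemma minimal_pm_seminorm_mult:
  assumes m: "m \<in> pm_seminorms nA" and min: "\<And>p. p \<in> pm_seminorms nA \<Longrightarrow> p \<le> m \<Longrightarrow> p = m"
  shows "m (a * c) = m a * m c"
proof (cases "m a = 0")
  case True
  then show ?thesis
    using ultra_seminorm_mult[OF pm_seminormsD(1)[OF m], of a c]
      ultra_seminorm_nonneg[OF pm_seminormsD(1)[OF m], of "a * c"] by simp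
next
  case False
  then have a: "0 < m a" using ultra_seminorm_nonneg[OF pm_seminormsD(1)[OF m]] by (simp add: less_le)
  have "shifted_seminorm m a \<le> m"
    using shifted_seminorm_le[OF m a, of _ 0] by (simp add: le_fun_def)
  then have "shifted_seminorm m a = m" by (rule min[OF shifted_seminorm_in_pm_seminorms[OF m a]])
  then have "m c \<le> m (a * c) / m a" using shifted_seminorm_le[OF m a, of c 1] by simp
  then have "m a * m c \<le> m (a * c)" using a by (simp add: field_simps)
  then show ?thesis using ultra_seminorm_mult[OF pm_seminormsD(1)[OF m], of a c] by simp
qed

lemma berk_spectrum_nonempty:
  assumes "k_alg_norm v emb nA"
  shows "berk_spectrum nA \<noteq> {}"
proof -
  note nA = k_alg_norm_ultra_seminorm[OF assms] k_alg_norm_1_pos[OF assms]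
  obtain m where m: "m \<in> pm_seminorms nA" and min: "\<And>p. p \<in> pm_seminorms nA \<Longrightarrow> p \<le> m \<Longrightarrow> p = m"
    using pm_seminorms_has_minimal[OF nA] by blast
  note pm = pm_seminormsD[OF m]
  have "m (a + b) \<le> m a + m b" for a b
    using ultra_seminorm_add[OF pm(1), of a b] ultra_seminorm_nonneg[OF pm(1), of a]
      ultra_seminorm_nonneg[OF pm(1), of b] by linarith
  then have "m \<in> berk_spectrum nA"
    unfolding berk_spectrum_def
    using ultra_seminorm_nonneg[OF pm(1)] ultra_seminorm_0[OF pm(1)] pm(2,4)
      minimal_pm_seminorm_mult[OF m min] by (auto intro!: exI[of _ 1])
  then show ?thesis by blast
qed

lemma alg_closed_has_root:
  fixes a :: "'k::field"
  assumes "alg_closed TYPE('k)" "q \<ge> 1"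
  obtains b where "b ^ q = a"
proof -
  have "degree (monom (1::'k) q + [:-a:]) = q"
    using assms(2) by (subst degree_add_eq_left) (auto simp: degree_monom_eq)
  then have "0 < degree (monom (1::'k) q + [:-a:])" using assms(2) by simp
  then obtain b where "poly (monom 1 q + [:-a:]) b = 0"
    using assms(1) unfolding alg_closed_def by blast
  then show ?thesis using that by (simp add: poly_monom)
qed

lemma exists_int_power_between:
  fixes \<tau> \<alpha> \<beta> :: real
  assumes "1 < \<tau>" "0 < \<alpha>" "\<tau> * \<alpha> < \<beta>"
  obtains j :: int where "\<alpha> < \<tau> powi j" "\<tau> powi j < \<beta>"
proof
  define j where "j = \<lfloor>log \<tau> \<alpha>\<rfloor> + 1"
  have j: "real_of_int j - 1 \<le> log \<tau> \<alpha>" "log \<tau> \<alpha> < real_of_int j"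
    using floor_correct[of "log \<tau> \<alpha>"] unfolding j_def by linarith+
  have powi: "\<tau> powi j = \<tau> powr real_of_int j" using assms(1) by (simp add: powr_real_of_int')
  show "\<alpha> < \<tau> powi j"
    using powr_less_mono[OF j(2), of \<tau>] assms(1,2) by (simp add: powi)
  have "\<tau> powr real_of_int j = \<tau> * \<tau> powr (real_of_int j - 1)"
    using assms(1) by (simp add: powr_diff)
  also have "\<dots> \<le> \<tau> * \<alpha>"
    using powr_mono[OF j(1), of \<tau>] assms(1,2) by simp
  finally show "\<tau> powi j < \<beta>" using assms(3) by (simp add: powi)
qed

context
  fixes v :: "'k::field \<Rightarrow> real"
  assumes v: "nonarch_abs v" and nt: "nontrivial_abs v" and ac: "alg_closed TYPE('k)"
begin

lemma nonarch_abs_value_near_1: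
  assumes "1 < \<rho>"
  obtains b where "1 < v b" "v b < \<rho>"
proof -
  obtain x where x: "v x \<noteq> 0" "v x \<noteq> 1" using nt unfolding nontrivial_abs_def by blast
  define a where "a = (if 1 < v x then x else inverse x)"
  have a: "1 < v a"
    using x nonarch_abs_nonneg[OF v, of x]
    by (auto simp: a_def nonarch_abs_inverse[OF v] one_less_inverse_iff)
  have "(\<lambda>q. root q (v a)) \<longlonglongrightarrow> 1" using a by (intro LIMSEQ_root_const) simp
  then have "\<forall>\<^sub>F q in sequentially. root q (v a) < \<rho>" using assms by (rule order_tendstoD)
  then obtain N where N: "\<And>q. q \<ge> N \<Longrightarrow> root q (v a) < \<rho>"
    by (auto simp: eventually_sequentially)
  define q where "q = max N 1"
  have q: "q \<ge> 1" "root q (v a) < \<rho>" using N[of q] by (auto simp: q_def)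
  obtain b where b: "b ^ q = a" using alg_closed_has_root[OF ac q(1)] by blast
  have "v b = root q (v a)"
    using q(1) nonarch_abs_nonneg[OF v, of b] by (simp flip: b add: nonarch_abs_power[OF v] real_root_power_cancel)
  then show ?thesis using that[of b] a q by simp
qed

lemma nonarch_abs_values_dense:
  assumes "0 \<le> \<alpha>" "\<alpha> < \<beta>"
  obtains c where "c \<noteq> 0" "\<alpha> < v c" "v c < \<beta>"
proof -
  define \<alpha>' where "\<alpha>' = max \<alpha> (\<beta> / 2)"
  have \<alpha>': "0 < \<alpha>'" "\<alpha>' < \<beta>" "\<alpha> \<le> \<alpha>'" using assms by (auto simp: \<alpha>'_def)
  have "1 < \<beta> / \<alpha>'" using \<alpha>' by simp
  then obtain b where b: "1 < v b" "v b < \<beta> / \<alpha>'" by (rule nonarch_abs_value_near_1)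
  have "v b * \<alpha>' < \<beta>" using b(2) \<alpha>'(1) by (simp add: field_simps)
  then obtain j where j: "\<alpha>' < v b powi j" "v b powi j < \<beta>"
    using exists_int_power_between[OF b(1) \<alpha>'(1)] by blast
  have "b \<noteq> 0" using b(1) nonarch_abs_eq_0_iff[OF v, of 0] by auto
  then show ?thesis
    using that[of "b powi j"] j \<alpha>'(3) by (simp add: nonarch_abs_power_int[OF v])
qed

end

abbreviation pointwise_topology :: "('a \<Rightarrow> real) topology" where
  "pointwise_topology \<equiv> product_topology (\<lambda>_. euclideanreal) UNIV"

lemma topspace_pointwise_topology [simp]: "topspace pointwise_topology = UNIV"
  by (simp add: PiE_UNIV_domain)

lemma continuous_map_pointwise_eval: "continuous_map pointwise_topology euclideanreal (\<lambda>y. y a)"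
  using continuous_map_product_projection[of a UNIV "\<lambda>_. euclideanreal"] by simp

lemma closedin_pointwise_preimage:
  assumes "\<And>i. continuous_map pointwise_topology euclideanreal (f i)" and "\<And>i. closed (C i)"
  shows "closedin pointwise_topology {y. \<forall>i. f i y \<in> C i}"
proof -
  have "closedin pointwise_topology {y. f i y \<in> C i}" for i
    using closedin_continuous_map_preimage[OF assms(1)[of i] assms(2)[of i, unfolded closed_closedin]]
    by simp
  then have "closedin pointwise_topology (\<Inter>i. {y. f i y \<in> C i})"
    by (intro closedin_Inter) auto
  moreover have "{y. \<forall>i. f i y \<in> C i} = (\<Inter>i. {y. f i y \<in> C i})" by auto
  ultimately show ?thesis by simp
qed

context
  fixes v :: "'k::field \<Rightarrow> real" and emb :: "'k \<Rightarrow> 'a::comm_ring_1" and nA :: "'a \<Rightarrow> real"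
  assumes kn: "k_alg_norm v emb nA"
begin

lemma berk_spectrum_eq_bounded_by_norm:
  "berk_spectrum nA = {y. (\<forall>a. 0 \<le> y a) \<and> y 0 = 0 \<and> y 1 = 1 \<and> (\<forall>a b. y (a + b) \<le> y a + y b)
      \<and> (\<forall>a b. y (a * b) = y a * y b) \<and> (\<forall>a. y a \<le> nA a)}" (is "_ = ?R")
proof
  show "berk_spectrum nA \<subseteq> ?R"
    using berk_spectrum_le_norm[OF kn] unfolding berk_spectrum_def by blast
  show "?R \<subseteq> berk_spectrum nA" unfolding berk_spectrum_def by (auto intro!: exI[of _ 1])
qed

lemma berk_spectrum_compact: "compactin (berk_top nA) (berk_spectrum nA)"
proof -
  note ev = continuous_map_pointwise_eval
  have "berk_spectrum nA =
      {y. \<forall>a. y a \<in> {0..nA a}} \<inter> {y. \<forall>i::unit. y 0 \<in> {0}} \<inter> {y. \<forall>i::unit. y 1 \<in> {1}}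
      \<inter> {y. \<forall>i. y (fst i) + y (snd i) - y (fst i + snd i) \<in> {0..}}
      \<inter> {y. \<forall>i. y (fst i * snd i) - y (fst i) * y (snd i) \<in> {0}}"
    unfolding berk_spectrum_eq_bounded_by_norm by auto
  also have "closedin pointwise_topology \<dots>"
    by (intro closedin_Int closedin_pointwise_preimage continuous_map_add continuous_map_diff
        continuous_map_real_mult ev) auto
  finally have "closedin pointwise_topology (berk_spectrum nA)" .
  moreover have "compactin pointwise_topology (PiE UNIV (\<lambda>a. {0..nA a}))"
    by (subst compactin_PiE) auto
  moreover have "berk_spectrum nA \<subseteq> PiE UNIV (\<lambda>a. {0..nA a})"
    using berk_spectrum_le_norm[OF kn] berk_spectrum_nonneg[OF kn] by (auto simp: PiE_UNIV_domain)
  ultimately show ?thesis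
    unfolding berk_top_def by (simp add: compactin_subtopology closed_compactin)
qed

end

lemma berk_basic_nbhd:
  assumes "openin (berk_top nA) U" "x \<in> U"
  obtains F \<delta> where "finite F" "0 < \<delta>" "{y \<in> berk_spectrum nA. \<forall>a\<in>F. \<bar>y a - x a\<bar> < \<delta>} \<subseteq> U"
proof -
  obtain T where T: "openin pointwise_topology T" "U = T \<inter> berk_spectrum nA"
    using assms(1) unfolding berk_top_def openin_subtopology by blast
  then obtain W where W: "finite {i. W i \<noteq> UNIV}" "\<And>i. open (W i)" "x \<in> PiE UNIV W" "PiE UNIV W \<subseteq> T"
    using assms(2) unfolding openin_product_topology_alt by auto
  define F where "F = {i. W i \<noteq> UNIV}"
  have "\<exists>e>0. ball (x i) e \<subseteq> W i" for i
    using W(2)[of i] W(3) unfolding open_contains_ball by (auto simp: PiE_iff)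
  then obtain d where d: "\<And>i. 0 < d i" "\<And>i. ball (x i) (d i) \<subseteq> W i"
    using choice[of "\<lambda>i e. 0 < e \<and> ball (x i) e \<subseteq> W i"] by blast
  define \<delta> where "\<delta> = Min (insert 1 (d ` F))"
  have F: "finite F" using W(1) by (simp add: F_def)
  have "{y \<in> berk_spectrum nA. \<forall>a\<in>F. \<bar>y a - x a\<bar> < \<delta>} \<subseteq> U"
  proof clarify
    fix y assume y: "y \<in> berk_spectrum nA" "\<forall>a\<in>F. \<bar>y a - x a\<bar> < \<delta>"
    have "y i \<in> W i" for i
    proof (cases "i \<in> F")
      case True
      have "\<delta> \<le> d i" unfolding \<delta>_def using F True by (intro Min_le) auto
      then have "\<bar>y i - x i\<bar> < d i" using y(2) True by fastforce
      then show ?thesis using d(2)[of i] by (auto simp: dist_real_def abs_minus_commute)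
    qed (simp add: F_def)
    then show "y \<in> U" using W(4) T(2) y(1) by (auto simp: PiE_iff)
  qed
  moreover have "0 < \<delta>" using F d(1) by (simp add: \<delta>_def)
  ultimately show ?thesis using that F by blast
qed

lemma openin_berk_strict_thresholds:
  assumes "finite L"
  shows "openin (berk_top nA) {y \<in> berk_spectrum nA. \<forall>(a, d, b) \<in> L. if b then y a < f d else f d < y a}"
proof -
  have "openin pointwise_topology {y. \<forall>(a, d, b) \<in> L. if b then y a < f d else f d < y a}"
    using assms
  proof (induction L rule: finite_induct)
    case (insert c L)
    obtain a d b where c: "c = (a, d, b)" by (cases c)
    have "openin pointwise_topology {y. y a \<in> (if b then {..<f d} else {f d<..})}"
      using openin_continuous_map_preimage[OF continuous_map_pointwise_eval, of _ a] by simp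
    moreover have "{y. \<forall>(a, d, b) \<in> insert c L. if b then y a < f d else f d < y a}
        = {y. y a \<in> (if b then {..<f d} else {f d<..})}
          \<inter> {y. \<forall>(a, d, b) \<in> L. if b then y a < f d else f d < y a}"
      by (auto simp: c)
    ultimately show ?case using openin_Int[OF _ insert.IH] by simp
  qed (simp add: openin_topspace[of pointwise_topology, simplified])
  then show ?thesis unfolding berk_top_def openin_subtopology by blast
qed

text \<open>The
  thresholds are values of elements \<open>d\<close> of \<open>k\<close>, so that multiplying \<open>a\<close> by a scalar of absolute
  value \<open>\<epsilon>/|d|\<close> turns the condition into one about \<open>\<epsilon>\<close>, i.e. about the reduction \<open>red\<^sub>\<epsilon>\<close>.\<close>
definition threshold_set ::
    "('k::field \<Rightarrow> real) \<Rightarrow> ('a::comm_ring_1 \<Rightarrow> real) \<Rightarrow> ('a \<times> 'k \<times> bool) set \<Rightarrow> ('a \<Rightarrow> real) set" where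
  "threshold_set v nA L = {y \<in> berk_spectrum nA. \<forall>a d b. (a, d, b) \<in> L \<longrightarrow> (y a < v d) = b}"

lemma threshold_setD:
  "y \<in> threshold_set v nA L \<Longrightarrow> (a, d, b) \<in> L \<Longrightarrow> (y a < v d) = b"
  unfolding threshold_set_def by blast

context
  fixes v :: "'k::field \<Rightarrow> real" and emb :: "'k \<Rightarrow> 'a::comm_ring_1" and nA :: "'a \<Rightarrow> real"
  assumes kn: "k_alg_norm v emb nA" and v: "nonarch_abs v"
    and nt: "nontrivial_abs v" and ac: "alg_closed TYPE('k)"
begin

lemma berk_threshold_nbhd:
  assumes U: "openin (berk_top nA) U" "x \<in> U"
  obtains L N where "finite L" "\<And>a d b. (a, d, b) \<in> L \<Longrightarrow> d \<noteq> 0" "openin (berk_top nA) N"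
    "x \<in> N" "N \<subseteq> threshold_set v nA L" "threshold_set v nA L \<subseteq> U"
proof -
  obtain F \<delta> where F: "finite F" "0 < \<delta>" and box: "{y \<in> berk_spectrum nA. \<forall>a\<in>F. \<bar>y a - x a\<bar> < \<delta>} \<subseteq> U"
    using berk_basic_nbhd[OF U] by blast
  have "U \<subseteq> berk_spectrum nA" using openin_subset[OF U(1)] by (simp add: berk_top_def)
  with U(2) have x: "x \<in> berk_spectrum nA" by blast
  note x0 = berk_spectrum_nonneg[OF kn x]
  have "\<exists>s. s \<noteq> 0 \<and> x a < v s \<and> v s < x a + \<delta>" for a
  proof -
    obtain c where "c \<noteq> 0" "x a < v c" "v c < x a + \<delta>"
      by (rule nonarch_abs_values_dense[OF v nt ac x0[of a], of "x a + \<delta>"]) (use F(2) in simp)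
    then show ?thesis by blast
  qed
  then obtain s where s: "\<And>a. s a \<noteq> 0 \<and> x a < v (s a) \<and> v (s a) < x a + \<delta>" by metis
  have "\<exists>r. r \<noteq> 0 \<and> max 0 (x a - \<delta>) < v r \<and> v r < x a" if xa: "0 < x a" for a
  proof -
    obtain c where "c \<noteq> 0" "max 0 (x a - \<delta>) < v c" "v c < x a"
      by (rule nonarch_abs_values_dense[OF v nt ac, of "max 0 (x a - \<delta>)" "x a"]) (use xa F(2) in simp_all)
    then show ?thesis by blast
  qed
  then obtain r where r: "\<And>a. 0 < x a \<Longrightarrow> r a \<noteq> 0 \<and> max 0 (x a - \<delta>) < v (r a) \<and> v (r a) < x a"
    by metis
  define L where "L = (\<lambda>a. (a, s a, True)) ` F \<union> (\<lambda>a. (a, r a, False)) ` {a \<in> F. 0 < x a}"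
  define N where "N = {y \<in> berk_spectrum nA. \<forall>(a, d, b) \<in> L. if b then y a < v d else v d < y a}"
  have sub: "threshold_set v nA L \<subseteq> U"
  proof
    fix y assume y: "y \<in> threshold_set v nA L"
    have "\<bar>y a - x a\<bar> < \<delta>" if a: "a \<in> F" for a
    proof -
      have "(a, s a, True) \<in> L" using a by (simp add: L_def)
      then have "y a < x a + \<delta>" using threshold_setD[OF y] s[of a] by fastforce
      moreover have "x a - \<delta> < y a"
      proof (cases "0 < x a")
        case True
        then have "(a, r a, False) \<in> L" using a by (simp add: L_def)
        then show ?thesis using threshold_setD[OF y] r[OF True] by fastforce
      next
        case False
        then show ?thesis
          using x0[of a] F(2) berk_spectrum_nonneg[OF kn, of y a] y by (simp add: threshold_set_def)
      qed
      ultimately show ?thesis by linarith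
    qed
    then show "y \<in> U" using box y by (auto simp: threshold_set_def)
  qed
  have fin: "finite L" using F(1) by (simp add: L_def)
  show ?thesis
  proof (rule that[OF fin _ _ _ _ sub])
    show "d \<noteq> 0" if "(a, d, b) \<in> L" for a d b using that s r by (auto simp: L_def)
    show "openin (berk_top nA) N" unfolding N_def by (rule openin_berk_strict_thresholds[OF fin])
    show "x \<in> N" using x s r by (auto simp: N_def L_def)
    show "N \<subseteq> threshold_set v nA L" by (auto simp: N_def threshold_set_def split: if_splits)
  qed
qed

lemma berk_finite_threshold_cover:
  assumes "\<forall>U\<in>\<U>. openin (berk_top nA) U" and "berk_spectrum nA \<subseteq> \<Union>\<U>"
  obtains \<LL> where "finite \<LL>" "\<forall>L\<in>\<LL>. finite L" "\<forall>L\<in>\<LL>. \<forall>a d b. (a, d, b) \<in> L \<longrightarrow> d \<noteq> 0"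
    "berk_spectrum nA \<subseteq> \<Union>(threshold_set v nA ` \<LL>)" "\<forall>L\<in>\<LL>. \<exists>U\<in>\<U>. threshold_set v nA L \<subseteq> U"
proof -
  define good where "good x L N \<longleftrightarrow> finite L \<and> (\<forall>a d b. (a, d, b) \<in> L \<longrightarrow> d \<noteq> 0)
      \<and> openin (berk_top nA) N \<and> x \<in> N \<and> N \<subseteq> threshold_set v nA L
      \<and> (\<exists>U\<in>\<U>. threshold_set v nA L \<subseteq> U)" for x L N
  have "\<exists>L N. good x L N" if x: "x \<in> berk_spectrum nA" for x
  proof -
    obtain U where U: "U \<in> \<U>" "x \<in> U" using assms(2) x by blast
    obtain L N where "finite L" "\<And>a d b. (a, d, b) \<in> L \<Longrightarrow> d \<noteq> 0" "openin (berk_top nA) N" "x \<in> N"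
      "N \<subseteq> threshold_set v nA L" "threshold_set v nA L \<subseteq> U"
      by (rule berk_threshold_nbhd[OF assms(1)[rule_format, OF U(1)] U(2)]) blast
    then have "good x L N" using U(1) unfolding good_def by blast
    then show ?thesis by blast
  qed
  then obtain L N where LN: "\<And>x. x \<in> berk_spectrum nA \<Longrightarrow> good x (L x) (N x)" by metis
  have "(\<forall>W\<in>N ` berk_spectrum nA. openin (berk_top nA) W) \<and> berk_spectrum nA \<subseteq> \<Union>(N ` berk_spectrum nA)"
    using LN unfolding good_def by blast
  then obtain \<F> where \<F>: "finite \<F>" "\<F> \<subseteq> N ` berk_spectrum nA" "berk_spectrum nA \<subseteq> \<Union>\<F>"
    using berk_spectrum_compact[OF kn] unfolding compactin_def by meson
  obtain X where X: "X \<subseteq> berk_spectrum nA" "finite X" "\<F> = N ` X"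
    using finite_subset_image[OF \<F>(1,2)] by blast
  have LX: "good x (L x) (N x)" if "x \<in> X" for x
    using LN X(1) that by blast
  show ?thesis
  proof (rule that[of "L ` X"])
    show "berk_spectrum nA \<subseteq> \<Union>(threshold_set v nA ` L ` X)"
      using X \<F>(3) LX unfolding good_def by blast
    show "finite (L ` X)" using X(2) by simp
    show "\<forall>L'\<in>L ` X. finite L'" using LX unfolding good_def by blast
    show "\<forall>L'\<in>L ` X. \<forall>a d b. (a, d, b) \<in> L' \<longrightarrow> d \<noteq> 0" using LX unfolding good_def by blast
    show "\<forall>L'\<in>L ` X. \<exists>U\<in>\<U>. threshold_set v nA L' \<subseteq> U" using LX unfolding good_def by blast
  qed
qed

end

lemma bool_comb_subset:
  assumes "\<forall>S\<in>B. S \<subseteq> X" "S \<in> bool_comb X B"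
  shows "S \<subseteq> X"
  using assms(2) by induction (use assms(1) in auto)

lemma bool_comb_Int:
  assumes "\<forall>S\<in>B. S \<subseteq> X" "S \<in> bool_comb X B" "T \<in> bool_comb X B"
  shows "S \<inter> T \<in> bool_comb X B"
proof -
  have "S \<inter> T = X - ((X - S) \<union> (X - T))"
    using bool_comb_subset[OF assms(1,2)] bool_comb_subset[OF assms(1,3)] by blast
  then show ?thesis using assms(2,3) by (simp add: bool_comb.compl bool_comb.union)
qed

lemma bool_comb_Union: "finite \<F> \<Longrightarrow> \<F> \<subseteq> bool_comb X B \<Longrightarrow> \<Union>\<F> \<in> bool_comb X B"
  by (induction \<F> rule: finite_induct) (auto intro: bool_comb.empty bool_comb.union)

lemma bool_comb_complete_cover:
  assumes "\<forall>S\<in>B. S \<subseteq> X" "finite \<V>" "\<V> \<subseteq> bool_comb X B"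
  shows "finite (insert (X - \<Union>\<V>) \<V>)" "insert (X - \<Union>\<V>) \<V> \<subseteq> bool_comb X B"
    "\<Union>(insert (X - \<Union>\<V>) \<V>) = X"
  using assms bool_comb_subset[OF assms(1)] by (auto intro: bool_comb.compl bool_comb_Union)

abbreviation eps_class :: "('a::comm_ring_1 \<Rightarrow> real) \<Rightarrow> real \<Rightarrow> 'a \<Rightarrow> 'a set" where
  "eps_class nA \<epsilon> g \<equiv> a_r_coset (A_circ nA) (I_eps nA \<epsilon>) g"

lemma eps_class_eq: "eps_class nA \<epsilon> g = {h + g | h. h \<in> I_eps nA \<epsilon>}"
  unfolding a_r_coset_def' A_circ_def by auto

lemma eps_class_in_A_eps: "spectral_norm nA g \<le> 1 \<Longrightarrow> eps_class nA \<epsilon> g \<in> carrier (A_eps nA \<epsilon>)"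
  unfolding A_eps_def FactRing_def A_RCOSETS_def' by (auto simp: A_circ_def)

definition Id_eps_cond :: "('a::comm_ring_1 \<Rightarrow> real) \<Rightarrow> real \<Rightarrow> ('a \<times> bool) set \<Rightarrow> 'a set set set" where
  "Id_eps_cond nA \<epsilon> G = {J \<in> Id_eps nA \<epsilon>. \<forall>g b. (g, b) \<in> G \<longrightarrow> (eps_class nA \<epsilon> g \<in> J) = b}"

lemma constructible_Id_eps_cond:
  assumes "finite G" "\<And>g b. (g, b) \<in> G \<Longrightarrow> spectral_norm nA g \<le> 1"
  shows "constructible_Id nA \<epsilon> (Id_eps_cond nA \<epsilon> G)"
  using assms unfolding constructible_Id_def
proof (induction G rule: finite_induct)
  case empty
  then show ?case
    using bool_comb.compl[OF bool_comb.empty] by (simp add: Id_eps_cond_def)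
next
  case (insert c G)
  obtain g b where c: "c = (g, b)" by fastforce
  let ?X = "Id_eps nA \<epsilon>" and ?B = "{{J \<in> Id_eps nA \<epsilon>. g \<in> J} | g. g \<in> carrier (A_eps nA \<epsilon>)}"
  have basic: "{J \<in> ?X. eps_class nA \<epsilon> g \<in> J} \<in> bool_comb ?X ?B"
    using insert.prems[of g b] eps_class_in_A_eps c by (intro bool_comb.basic) auto
  define T where "T = (if b then {J \<in> ?X. eps_class nA \<epsilon> g \<in> J} else ?X - {J \<in> ?X. eps_class nA \<epsilon> g \<in> J})"
  have "T \<in> bool_comb ?X ?B" unfolding T_def using basic by (auto intro: bool_comb.compl)
  moreover have "Id_eps_cond nA \<epsilon> (insert c G) = T \<inter> Id_eps_cond nA \<epsilon> G"
    unfolding Id_eps_cond_def T_def c by auto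
  moreover have "Id_eps_cond nA \<epsilon> G \<in> bool_comb ?X ?B" using insert by blast
  ultimately show ?case using bool_comb_Int[of ?B ?X] by auto
qed

text \<open>Elements of \<open>I_eps nA \<epsilon>\<close> are smaller than \<open>\<epsilon>\<close> at every point, so by the ultrametric
  inequality the condition \<open>y g < \<epsilon>\<close> only depends on the class of \<open>g\<close>.\<close>
lemma eps_class_mem_red_eps_iff:
  assumes kn: "k_alg_norm v emb nA" and y: "y \<in> berk_spectrum nA" and "0 < \<epsilon>"
    and g: "spectral_norm nA g \<le> 1"
  shows "eps_class nA \<epsilon> g \<in> red_eps nA \<epsilon> y \<longleftrightarrow> y g < \<epsilon>"
proof
  assume "y g < \<epsilon>"
  then show "eps_class nA \<epsilon> g \<in> red_eps nA \<epsilon> y" unfolding red_eps_def using g by (auto simp: A_circ_def)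
next
  assume "eps_class nA \<epsilon> g \<in> red_eps nA \<epsilon> y"
  then obtain a where a: "y a < \<epsilon>" "eps_class nA \<epsilon> a = eps_class nA \<epsilon> g"
    unfolding red_eps_def by auto
  have "0 \<in> I_eps nA \<epsilon>"
    using spectral_norm_0[OF k_alg_norm_ultra_seminorm[OF kn]] \<open>0 < \<epsilon>\<close> by (simp add: I_eps_def)
  then have "g \<in> eps_class nA \<epsilon> g" unfolding eps_class_eq by force
  then have "g \<in> eps_class nA \<epsilon> a" using a(2) by simp
  then obtain h where h: "h \<in> I_eps nA \<epsilon>" "g = h + a" unfolding eps_class_eq by blast
  have "y h < \<epsilon>" using berk_spectrum_le_spectral_norm[OF kn y, of h] h(1) by (simp add: I_eps_def)
  then show "y g < \<epsilon>" using berk_spectrum_add_le_max[OF kn y, of h a] h(2) a(1) by simp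
qed

lemma exists_pos_mult_le_on_finite:
  fixes f g :: "'b \<Rightarrow> real"
  assumes "finite S" "\<And>x. x \<in> S \<Longrightarrow> 0 \<le> f x" "\<And>x. x \<in> S \<Longrightarrow> 0 < g x"
  shows "\<exists>c>0. \<forall>x\<in>S. c * f x \<le> g x"
proof (intro exI conjI ballI)
  define c where "c = Min (insert 1 ((\<lambda>x. g x / (f x + 1)) ` S))"
  show "0 < c" using assms by (simp add: c_def add_nonneg_pos)
  fix x assume x: "x \<in> S"
  have "c \<le> g x / (f x + 1)" using assms(1) x by (simp add: c_def)
  then have "c * (f x + 1) \<le> g x" using assms(2)[OF x] by (simp add: field_simps add_nonneg_pos)
  then show "c * f x \<le> g x" using \<open>0 < c\<close> by (simp add: algebra_simps)
qed

definition scaled_conds :: "('k::field \<Rightarrow> 'a::comm_ring_1) \<Rightarrow> 'k \<Rightarrow> ('a \<times> 'k \<times> bool) set \<Rightarrow> ('a \<times> bool) set"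
  where "scaled_conds emb e L = {(emb (e / d) * a, b) | a d b. (a, d, b) \<in> L}"

context
  fixes v :: "'k::field \<Rightarrow> real" and emb :: "'k \<Rightarrow> 'a::comm_ring_1" and nA :: "'a \<Rightarrow> real"
  assumes kn: "k_alg_norm v emb nA" and v: "nonarch_abs v"
begin

lemma spectral_norm_scaled_le_1:
  assumes "d \<noteq> 0" "v e * spectral_norm nA a \<le> v d"
  shows "spectral_norm nA (emb (e / d) * a) \<le> 1"
proof -
  have "spectral_norm nA (emb (e / d) * a) = v e / v d * spectral_norm nA a"
    by (simp add: spectral_norm_emb_mult[OF kn v] nonarch_abs_divide[OF v])
  also have "\<dots> \<le> 1" using assms nonarch_abs_pos[OF v, of d] by (simp add: field_simps)
  finally show ?thesis .
qed

lemma scaled_class_mem_red_eps_iff: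
  assumes y: "y \<in> berk_spectrum nA" and "e \<noteq> 0" "d \<noteq> 0" "v e * spectral_norm nA a \<le> v d"
  shows "eps_class nA (v e) (emb (e / d) * a) \<in> red_eps nA (v e) y \<longleftrightarrow> y a < v d"
proof -
  have "eps_class nA (v e) (emb (e / d) * a) \<in> red_eps nA (v e) y \<longleftrightarrow> v e / v d * y a < v e"
    using eps_class_mem_red_eps_iff[OF kn y nonarch_abs_pos[OF v \<open>e \<noteq> 0\<close>] spectral_norm_scaled_le_1[OF assms(3,4)]]
    by (simp add: berk_spectrum_mult[OF kn y] berk_spectrum_emb[OF kn y v] nonarch_abs_divide[OF v])
  also have "\<dots> \<longleftrightarrow> y a < v d"
    using nonarch_abs_pos[OF v \<open>e \<noteq> 0\<close>] nonarch_abs_pos[OF v \<open>d \<noteq> 0\<close>] by (simp add: field_simps)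
  finally show ?thesis .
qed

lemma scaled_conds_le_1:
  assumes "\<And>a d b. (a, d, b) \<in> L \<Longrightarrow> d \<noteq> 0 \<and> v e * spectral_norm nA a \<le> v d"
    and "(g, b) \<in> scaled_conds emb e L"
  shows "spectral_norm nA g \<le> 1"
  using assms spectral_norm_scaled_le_1 unfolding scaled_conds_def by blast

lemma red_eps_in_Id_eps_cond_iff:
  assumes y: "y \<in> berk_spectrum nA" and e: "e \<noteq> 0"
    and L: "\<And>a d b. (a, d, b) \<in> L \<Longrightarrow> d \<noteq> 0 \<and> v e * spectral_norm nA a \<le> v d"
  shows "red_eps nA (v e) y \<in> Id_eps_cond nA (v e) (scaled_conds emb e L)
    \<longleftrightarrow> y \<in> threshold_set v nA L \<and> red_eps nA (v e) y \<in> Id_eps nA (v e)"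
proof -
  have "(eps_class nA (v e) (emb (e / d) * a) \<in> red_eps nA (v e) y) = (y a < v d)"
    if "(a, d, b) \<in> L" for a d b
    using scaled_class_mem_red_eps_iff[OF y e] L[OF that] by blast
  then show ?thesis using y unfolding Id_eps_cond_def scaled_conds_def threshold_set_def by blast
qed

lemma constructible_cover_of_threshold_cover:
  assumes "berk_spectrum nA \<noteq> {}" and e: "e \<noteq> 0"
    and \<LL>: "finite \<LL>" "\<forall>L\<in>\<LL>. finite L"
    and small: "\<forall>L\<in>\<LL>. \<forall>a d b. (a, d, b) \<in> L \<longrightarrow> d \<noteq> 0 \<and> v e * spectral_norm nA a \<le> v d"
    and cover: "berk_spectrum nA \<subseteq> \<Union>(threshold_set v nA ` \<LL>)"
  obtains \<V> where "finite \<V>" "\<forall>V\<in>\<V>. constructible_Id nA (v e) V" "\<Union>\<V> = Id_eps nA (v e)"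
    "\<forall>V\<in>\<V>. \<exists>L\<in>\<LL>. {y \<in> berk_spectrum nA. red_eps nA (v e) y \<in> V} \<subseteq> threshold_set v nA L"
proof -
  let ?X = "Id_eps nA (v e)" and ?B = "{{J \<in> Id_eps nA (v e). g \<in> J} | g. g \<in> carrier (A_eps nA (v e))}"
  have small': "d \<noteq> 0 \<and> v e * spectral_norm nA a \<le> v d" if "L \<in> \<LL>" "(a, d, b) \<in> L" for L a d b
    using small that by blast
  define \<V> where "\<V> = (\<lambda>L. Id_eps_cond nA (v e) (scaled_conds emb e L)) ` \<LL>"
  have cons: "constructible_Id nA (v e) (Id_eps_cond nA (v e) (scaled_conds emb e L))" if "L \<in> \<LL>" for L
  proof (rule constructible_Id_eps_cond)
    have "scaled_conds emb e L = (\<lambda>(a, d, b). (emb (e / d) * a, b)) ` L"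
      unfolding scaled_conds_def by force
    then show "finite (scaled_conds emb e L)" using \<LL>(2) that by simp
    show "spectral_norm nA g \<le> 1" if "(g, b) \<in> scaled_conds emb e L" for g b
      by (rule scaled_conds_le_1[OF small'[OF \<open>L \<in> \<LL>\<close>] that])
  qed
  have "\<V> \<subseteq> {V. constructible_Id nA (v e) V}" using cons by (auto simp: \<V>_def)
  then have \<V>: "finite \<V>" "\<V> \<subseteq> bool_comb ?X ?B"
    using \<LL>(1) unfolding \<V>_def constructible_Id_def by auto
  have "\<forall>S\<in>?B. S \<subseteq> ?X" by auto
  note complete = bool_comb_complete_cover[OF this \<V>]
  have pre: "{y \<in> berk_spectrum nA. red_eps nA (v e) y \<in> Id_eps_cond nA (v e) (scaled_conds emb e L)}
      \<subseteq> threshold_set v nA L" if "L \<in> \<LL>" for L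
  proof clarify
    fix y assume "y \<in> berk_spectrum nA" "red_eps nA (v e) y \<in> Id_eps_cond nA (v e) (scaled_conds emb e L)"
    then show "y \<in> threshold_set v nA L" using red_eps_in_Id_eps_cond_iff[OF _ e small'[OF that]] by simp
  qed
  have "red_eps nA (v e) y \<in> \<Union>\<V>" if y: "y \<in> berk_spectrum nA" "red_eps nA (v e) y \<in> ?X" for y
  proof -
    have "y \<in> \<Union>(threshold_set v nA ` \<LL>)" using cover y(1) ..
    then obtain L where L: "L \<in> \<LL>" "y \<in> threshold_set v nA L" by blast
    then have "red_eps nA (v e) y \<in> Id_eps_cond nA (v e) (scaled_conds emb e L)"
      using red_eps_in_Id_eps_cond_iff[OF y(1) e small'[OF L(1)]] y(2) by simp
    then show ?thesis unfolding \<V>_def by (rule UnionI[OF imageI[OF L(1)]])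
  qed
  then have empty: "{y \<in> berk_spectrum nA. red_eps nA (v e) y \<in> ?X - \<Union>\<V>} = {}" by blast
  obtain L0 where "L0 \<in> \<LL>" using assms(1) cover by blast
  show ?thesis
  proof (rule that[of "insert (?X - \<Union>\<V>) \<V>"])
    show "finite (insert (?X - \<Union>\<V>) \<V>)" by (rule complete(1))
    show "\<forall>V\<in>insert (?X - \<Union>\<V>) \<V>. constructible_Id nA (v e) V"
      using complete(2) unfolding constructible_Id_def by blast
    show "\<Union>(insert (?X - \<Union>\<V>) \<V>) = ?X" by (rule complete(3))
    show "\<forall>V\<in>insert (?X - \<Union>\<V>) \<V>. \<exists>L\<in>\<LL>.
        {y \<in> berk_spectrum nA. red_eps nA (v e) y \<in> V} \<subseteq> threshold_set v nA L"
    proof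
      fix V assume "V \<in> insert (?X - \<Union>\<V>) \<V>"
      then consider "V = ?X - \<Union>\<V>" | L where "L \<in> \<LL>" "V = Id_eps_cond nA (v e) (scaled_conds emb e L)"
        unfolding \<V>_def by blast
      then show "\<exists>L\<in>\<LL>. {y \<in> berk_spectrum nA. red_eps nA (v e) y \<in> V} \<subseteq> threshold_set v nA L"
      proof cases
        case 1
        then show ?thesis using empty \<open>L0 \<in> \<LL>\<close> by blast
      next
        case 2
        then show ?thesis using pre by blast
      qed
    qed
  qed
qed

lemma threshold_scaling_margin:
  assumes "finite \<LL>" "\<forall>L\<in>\<LL>. finite L" "\<forall>L\<in>\<LL>. \<forall>a d b. (a, d, b) \<in> L \<longrightarrow> d \<noteq> 0"
  shows "\<exists>\<epsilon>0>0. \<forall>e. v e < \<epsilon>0 \<longrightarrow>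
    (\<forall>L\<in>\<LL>. \<forall>a d b. (a, d, b) \<in> L \<longrightarrow> d \<noteq> 0 \<and> v e * spectral_norm nA a \<le> v d)"
proof -
  note \<rho>_nonneg = spectral_norm_nonneg[OF k_alg_norm_ultra_seminorm[OF kn]]
  have fin: "finite (\<Union>\<LL>)" by (rule finite_Union) (use assms(1,2) in auto)
  have pos: "0 < v (fst (snd c))" if "c \<in> \<Union>\<LL>" for c
    using that assms(3) nonarch_abs_pos[OF v] by (cases c) auto
  have "\<exists>\<epsilon>0>0. \<forall>c\<in>\<Union>\<LL>. \<epsilon>0 * spectral_norm nA (fst c) \<le> v (fst (snd c))"
    by (rule exists_pos_mult_le_on_finite[OF fin \<rho>_nonneg pos])
  then obtain \<epsilon>0 where "0 < \<epsilon>0" and \<epsilon>0: "\<forall>c\<in>\<Union>\<LL>. \<epsilon>0 * spectral_norm nA (fst c) \<le> v (fst (snd c))"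
    by blast
  have "d \<noteq> 0 \<and> v e * spectral_norm nA a \<le> v d" if e: "v e < \<epsilon>0" and L: "L \<in> \<LL>" "(a, d, b) \<in> L"
    for e L a d b
  proof -
    have "v e * spectral_norm nA a \<le> \<epsilon>0 * spectral_norm nA a"
      using e \<rho>_nonneg by (simp add: mult_right_mono)
    also have "\<dots> \<le> v d" using bspec[OF \<epsilon>0, of "(a, d, b)"] L by auto
    finally show ?thesis using assms(3) L by blast
  qed
  then show ?thesis using \<open>0 < \<epsilon>0\<close> by blast
qed

end

theorem lemma5p5:
  fixes v :: "'k::field \<Rightarrow> real" and emb :: "'k \<Rightarrow> 'a::comm_ring_1"
    and nA :: "'a \<Rightarrow> real" and \<U> :: "('a \<Rightarrow> real) set set"
  assumes "nonarch_abs v" and "complete_abs v" and "nontrivial_abs v"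
    and "alg_closed TYPE('k)"
    and "strictly_affinoid v emb nA"
    and "finite \<U>" and "\<forall>U\<in>\<U>. openin (berk_top nA) U" and "\<Union>\<U> = berk_spectrum nA"
  shows "\<exists>\<epsilon>0>0. \<forall>\<epsilon>. \<epsilon> \<in> v ` (UNIV - {0}) \<and> \<epsilon> < \<epsilon>0 \<longrightarrow>
           (\<exists>\<V>. finite \<V> \<and> (\<forall>V\<in>\<V>. constructible_Id nA \<epsilon> V) \<and> \<Union>\<V> = Id_eps nA \<epsilon>
              \<and> (\<forall>V\<in>\<V>. \<exists>U\<in>\<U>. {x \<in> berk_spectrum nA. red_eps nA \<epsilon> x \<in> V} \<subseteq> U))"
proof -
  have kn: "k_alg_norm v emb nA" using assms(5) unfolding strictly_affinoid_def by blast
  obtain \<LL> where \<LL>: "finite \<LL>" "\<forall>L\<in>\<LL>. finite L" "\<forall>L\<in>\<LL>. \<forall>a d b. (a, d, b) \<in> L \<longrightarrow> d \<noteq> 0"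
    "berk_spectrum nA \<subseteq> \<Union>(threshold_set v nA ` \<LL>)" "\<forall>L\<in>\<LL>. \<exists>U\<in>\<U>. threshold_set v nA L \<subseteq> U"
    by (rule berk_finite_threshold_cover[OF kn assms(1,3,4,7) equalityD2[OF assms(8)]])
  obtain \<epsilon>0 where "0 < \<epsilon>0" and \<epsilon>0: "\<forall>e. v e < \<epsilon>0 \<longrightarrow>
      (\<forall>L\<in>\<LL>. \<forall>a d b. (a, d, b) \<in> L \<longrightarrow> d \<noteq> 0 \<and> v e * spectral_norm nA a \<le> v d)"
    using threshold_scaling_margin[OF kn assms(1) \<LL>(1-3)] by blast
  show ?thesis
  proof (intro exI[of _ \<epsilon>0] conjI allI impI \<open>0 < \<epsilon>0\<close>)
    fix \<epsilon> assume "\<epsilon> \<in> v ` (UNIV - {0}) \<and> \<epsilon> < \<epsilon>0"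
    then obtain e where e: "e \<noteq> 0" "v e < \<epsilon>0" and \<epsilon>: "\<epsilon> = v e" by auto
    have small: "\<forall>L\<in>\<LL>. \<forall>a d b. (a, d, b) \<in> L \<longrightarrow> d \<noteq> 0 \<and> v e * spectral_norm nA a \<le> v d"
      using \<epsilon>0 e(2) by blast
    obtain \<V> where \<V>: "finite \<V>" "\<forall>V\<in>\<V>. constructible_Id nA (v e) V" "\<Union>\<V> = Id_eps nA (v e)"
      "\<forall>V\<in>\<V>. \<exists>L\<in>\<LL>. {y \<in> berk_spectrum nA. red_eps nA (v e) y \<in> V} \<subseteq> threshold_set v nA L"
      by (rule constructible_cover_of_threshold_cover[OF kn assms(1) berk_spectrum_nonempty[OF kn]
          e(1) \<LL>(1,2) small \<LL>(4)])
    have refine: "\<exists>U\<in>\<U>. {x \<in> berk_spectrum nA. red_eps nA (v e) x \<in> V} \<subseteq> U" if V: "V \<in> \<V>" for V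
    proof -
      obtain L where L: "L \<in> \<LL>" "{y \<in> berk_spectrum nA. red_eps nA (v e) y \<in> V} \<subseteq> threshold_set v nA L"
        using \<V>(4) V by blast
      obtain U where U: "U \<in> \<U>" "threshold_set v nA L \<subseteq> U" using \<LL>(5) L(1) by blast
      show ?thesis by (rule bexI[where x = U]) (rule subset_trans[OF L(2) U(2)], rule U(1))
    qed
    show "\<exists>\<V>. finite \<V> \<and> (\<forall>V\<in>\<V>. constructible_Id nA \<epsilon> V) \<and> \<Union>\<V> = Id_eps nA \<epsilon>
        \<and> (\<forall>V\<in>\<V>. \<exists>U\<in>\<U>. {x \<in> berk_spectrum nA. red_eps nA \<epsilon> x \<in> V} \<subseteq> U)"
      unfolding \<epsilon> using \<V>(1-3) refine by (intro exI[of _ \<V>] conjI ballI) auto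
  qed
qed

end
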